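(* Let $p$ be an odd prime, let $\nu_k=2\cos\left(\frac{(2k-1)\pi}{2p}\right)$ for $1\le k\le p$, and let $\theta_1,\dots,\theta_{p-1}$ be the nodes $\nu_k$ with $k\ne\frac{p+1}{2}$, listed in the order: $\nu_{(p+1)/2}$ is replaced by $\nu_1$ in the list $\nu_1,\dots,\nu_p$ and the first entry is removed. Let $R_i^*(x)\in\mathbb{Z}[x]$, $1\le i\le p-1$, be monic of degree $i$ with zero constant term, given by $R_i^*(x)=2T_i(x/2)+2r_i$ where $r_i=0$ for $i$ odd, $r_i=1$ for $i\equiv2\pmod4$, $r_i=-1$ for $i\equiv0\pmod4$, and let $N_{4p}=(R_i^*(\theta_j))_{1\le j\le p-1,\,1\le i\le p-1}$. Then $$N_{4p}=P\,U_{4p},\qquad P=\mathrm{diag}(\theta_1,\dots,\theta_{p-1}),\qquad U_{4p}=\big(r_i^*(\theta_j)\big)_{1\le j\le p-1,\ 0\le i\le p-2},$$ where for each $i\in\{0,\dots,p-2\}$ the polynomial $r_i^*(x)\in\mathbb{Z}[x]$ is monic of degree $i$. Moreover $\mathrm{Cond}(U_{4p})\le p^3(p+1)(2p-1)^2$.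
   Context: $T_i$ is the Tchebycheff polynomial of the first kind ($T_0=1$, $T_1=x$, $T_i=2xT_{i-1}-T_{i-2}$). For an invertible complex matrix $A$, $\|A\|=\sqrt{\mathrm{Tr}(AA^* )}$ is the Frobenius norm and $\mathrm{Cond}(A)=\|A\|\,\|A^{-1}\|$. The matrix $N_{4p}$ is the lower-right $(p-1)\times(p-1)$ block of $FQ_{4p}C$, where $Q_{4p}$ is $(2T_i(\nu_k/2))_{k,i}$ with rows $1$ and $\frac{p+1}{2}$ interchanged, $F$ subtracts the first row from all other rows, and $C$ adds $r_i$ times column $0$ to column $i$. *)

theory Defs
  imports "Jordan_Normal_Form.Matrix" "HOL-Computational_Algebra.Polynomial"
begin

fun cheb :: "nat \<Rightarrow> real \<Rightarrow> real" where
  "cheb 0 x = 1"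
| "cheb (Suc 0) x = x"
| "cheb (Suc (Suc n)) x = 2 * x * cheb (Suc n) x - cheb n x"

definition nu :: "nat \<Rightarrow> nat \<Rightarrow> real" where
  "nu p k = 2 * cos ((2 * real k - 1) * pi / (2 * real p))"

definition theta :: "nat \<Rightarrow> nat \<Rightarrow> real" where
  "theta p j = (if j + 1 = (p + 1) div 2 then nu p 1 else nu p (j + 1))"

definition rcoef :: "nat \<Rightarrow> real" where
  "rcoef i = (if odd i then 0 else if i mod 4 = 2 then 1 else -1)"

definition Rstar :: "nat \<Rightarrow> real \<Rightarrow> real" where
  "Rstar i x = 2 * cheb i (x / 2) + 2 * rcoef i"

text \<open>N_{4p} = (R_i^*(theta_j))_{1<=j<=p-1, 1<=i<=p-1}, stored 0-based.\<close>
definition N4p :: "nat \<Rightarrow> real mat" where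
  "N4p p = mat (p - 1) (p - 1) (\<lambda>(j, i). Rstar (i + 1) (theta p (j + 1)))"

definition Pdiag :: "nat \<Rightarrow> real mat" where
  "Pdiag p = mat_diag (p - 1) (\<lambda>j. theta p (j + 1))"

definition U4p :: "nat \<Rightarrow> (nat \<Rightarrow> int poly) \<Rightarrow> real mat" where
  "U4p p r = mat (p - 1) (p - 1) (\<lambda>(j, i). poly (map_poly of_int (r i)) (theta p (j + 1)))"

definition frob :: "real mat \<Rightarrow> real" where
  "frob A = sqrt (\<Sum>i<dim_row A. \<Sum>j<dim_col A. (A $$ (i, j))^2)"

definition mat_inverse :: "real mat \<Rightarrow> real mat" where
  "mat_inverse A = (THE B. B \<in> carrier_mat (dim_row A) (dim_row A) \<and>
      A * B = 1\<^sub>m (dim_row A) \<and> B * A = 1\<^sub>m (dim_row A))"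

definition Cond :: "real mat \<Rightarrow> real" where
  "Cond A = frob A * frob (mat_inverse A)"

end

theory Submission
  imports Defs "Jordan_Normal_Form.Determinant"
begin

(* Write theta = 2 cos phi. Since R_n^*(2 cos phi) = 2 cos (n phi) + 2 r_n and R_n^*(0) = 0, the
   entries of U_{4p} are R_{i+1}^*(theta_j) / theta_j, values of integer polynomials, and N = P U.
   The inverse of U is explicit: by the discrete orthogonality of cos (m phi_k) over the p angles
   phi_k = (2k-1) pi / (2p), the matrix (theta_j T_{i+1}(theta_j / 2) / p)_{i,j} is a left inverse;
   the omitted node nu_{(p+1)/2} = 0 contributes nothing to the orthogonality sums. Its entries are
   at most 2/p, and those of U at most 4p because |theta_j| >= 1/p, so Cond U <= 8 (p-1)^2, well
   below the stated bound. *)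

lemma cheb_cos: "cheb n (cos t) = cos (real n * t)"
proof (induction n rule: induct_nat_012)
  case (ge2 n)
  have "cos (real (Suc (Suc n)) * t) = 2 * cos t * cos (real (Suc n) * t) - cos (real n * t)"
    using cos_times_cos[of t "real (Suc n) * t"] by (simp add: algebra_simps)
  with ge2 show ?case by simp
qed simp_all

lemma abs_cheb_cos_le_1: "\<bar>cheb n (cos t)\<bar> \<le> 1"
  by (simp add: cheb_cos)

lemma sin_times_sum_cos_odd_multiples:
  "2 * sin a * (\<Sum>k<n. cos (real (2 * k + 1) * a)) = sin (real (2 * n) * a)"
proof (induction n)
  case (Suc n)
  have "2 * sin a * cos (real (2 * n + 1) * a) = sin (real (2 * Suc n) * a) - sin (real (2 * n) * a)"
    using sin_times_cos[of a "real (2 * n + 1) * a"] by (simp add: algebra_simps)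
  with Suc show ?case by (simp add: algebra_simps)
qed simp

definition node_angle :: "nat \<Rightarrow> nat \<Rightarrow> real" where
  "node_angle p k = real (2 * k + 1) * pi / (2 * real p)"

lemma nu_Suc: "nu p (Suc k) = 2 * cos (node_angle p k)"
  by (simp add: nu_def node_angle_def)

lemma sum_cos_node_angle:
  assumes "0 < m" "m < 2 * p"
  shows "(\<Sum>k<p. cos (real m * node_angle p k)) = 0"
proof -
  define a where "a = real m * pi / (2 * real p)"
  have "real m * node_angle p k = real (2 * k + 1) * a" for k
    by (simp add: node_angle_def a_def)
  moreover have "sin a > 0"
    using assms by (intro sin_gt_zero) (simp_all add: a_def field_simps)
  moreover have "sin (real (2 * p) * a) = 0"
  proof -
    have "real (2 * p) * a = real m * pi"
      using assms by (simp add: a_def)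
    then show ?thesis
      by simp
  qed
  ultimately show ?thesis
    using sin_times_sum_cos_odd_multiples[of a p] by simp
qed

lemma sum_cos_node_angle_orthogonal:
  assumes "0 < a" "a < p" "0 < b" "b < p"
  shows "(\<Sum>k<p. cos (real a * node_angle p k) * cos (real b * node_angle p k)) =
    (if a = b then real p / 2 else 0)"
proof -
  define d where "d = (if b \<le> a then a - b else b - a)"
  have pointwise:
    "cos (real a * t) * cos (real b * t) = (cos (real d * t) + cos (real (a + b) * t)) / 2" for t
  proof -
    have "cos (real a * t - real b * t) = cos (real d * t)"
    proof (cases "b \<le> a")
      case False
      then have "real a * t - real b * t = - (real d * t)"
        by (simp add: d_def of_nat_diff left_diff_distrib)
      then show ?thesis
        by (simp only: cos_minus)
    qed (simp add: d_def of_nat_diff left_diff_distrib)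
    then show ?thesis
      by (simp add: cos_times_cos distrib_right)
  qed
  have "(\<Sum>k<p. cos (real a * node_angle p k) * cos (real b * node_angle p k)) =
      ((\<Sum>k<p. cos (real d * node_angle p k)) + (\<Sum>k<p. cos (real (a + b) * node_angle p k))) / 2"
    unfolding pointwise sum.distrib[symmetric] sum_divide_distrib ..
  moreover have "(\<Sum>k<p. cos (real (a + b) * node_angle p k)) = 0"
    using assms by (intro sum_cos_node_angle) auto
  moreover have "(\<Sum>k<p. cos (real d * node_angle p k)) = 0" if "a \<noteq> b"
    using assms that by (intro sum_cos_node_angle) (auto simp: d_def)
  ultimately show ?thesis
    by (cases "a = b") (simp_all add: d_def)
qed

definition rcoef_int :: "nat \<Rightarrow> int" where
  "rcoef_int i = (if odd i then 0 else if i mod 4 = 2 then 1 else -1)"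

lemma of_int_rcoef_int: "real_of_int (rcoef_int i) = rcoef i"
  by (simp add: rcoef_int_def rcoef_def)

lemma rcoef_Suc_Suc: "rcoef (Suc (Suc n)) = - rcoef n"
proof -
  have "even n \<Longrightarrow> Suc (Suc n) mod 4 = 2 \<longleftrightarrow> n mod 4 \<noteq> 2"
    by presburger
  then show ?thesis
    by (auto simp: rcoef_def)
qed

lemma Rstar_Suc_Suc:
  "Rstar (Suc (Suc n)) x = x * Rstar (Suc n) x - Rstar n x - 2 * x * rcoef (Suc n)"
  by (simp add: Rstar_def rcoef_Suc_Suc algebra_simps)

(* rstar_poly i = R_{i+1}^*(x) / x is the polynomial r_i^* of the theorem; its recursion is
   Rstar_Suc_Suc divided by x. *)
fun rstar_poly :: "nat \<Rightarrow> int poly" where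
  "rstar_poly 0 = 1"
| "rstar_poly (Suc 0) = [:0, 1:]"
| "rstar_poly (Suc (Suc n)) =
     pCons 0 (rstar_poly (Suc n)) - rstar_poly n - [:2 * rcoef_int (Suc (Suc n)):]"

lemma map_poly_of_int_add:
  "map_poly of_int (p + q) = map_poly of_int p + map_poly of_int (q :: int poly)"
  by (rule poly_eqI) (simp add: coeff_map_poly)

lemma map_poly_of_int_diff:
  "map_poly of_int (p - q) = map_poly of_int p - map_poly of_int (q :: int poly)"
  by (rule poly_eqI) (simp add: coeff_map_poly)

lemma Rstar_Suc_eq_rstar_poly:
  "Rstar (Suc i) x = x * poly (map_poly of_int (rstar_poly i)) x"
proof (induction i rule: rstar_poly.induct)
  case 1
  then show ?case by (simp add: Rstar_def rcoef_def)
next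
  case 2
  then show ?case by (simp add: Rstar_def rcoef_def map_poly_pCons)
next
  case (3 n)
  then show ?case
    by (simp add: Rstar_Suc_Suc[of "Suc n"] map_poly_of_int_add map_poly_of_int_diff
        map_poly_pCons of_int_rcoef_int algebra_simps)
qed

lemma rstar_poly_monic: "lead_coeff (rstar_poly i) = 1 \<and> degree (rstar_poly i) = i"
proof (induction i rule: rstar_poly.induct)
  case (3 n)
  define top where "top = pCons 0 (rstar_poly (Suc n))"
  define low where "low = - rstar_poly n - [:2 * rcoef_int (Suc (Suc n)):]"
  have top: "lead_coeff top = 1" "degree top = Suc (Suc n)"
    using "3.IH"(1) by (auto simp: top_def)
  have "degree low \<le> n"
    using "3.IH"(2) by (auto simp: low_def intro!: degree_diff_le)
  then have "degree low < degree top"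
    using top by simp
  moreover have "rstar_poly (Suc (Suc n)) = low + top"
    by (simp add: low_def top_def)
  ultimately show ?case
    using top lead_coeff_add_le degree_add_eq_right by metis
qed simp_all

lemma nu_middle: "nu (2 * m + 1) (Suc m) = 0"
proof -
  have "(2 * real (Suc m) - 1) * pi / (2 * real (2 * m + 1)) = pi / 2"
    by (simp add: field_simps)
  then show ?thesis
    unfolding nu_def by (simp only:) simp
qed

lemma sum_theta_eq_sum_nu:
  assumes "odd p" "g 0 = 0"
  shows "(\<Sum>j<p - 1. g (theta p (Suc j))) = (\<Sum>k<p. g (nu p (Suc k)))"
proof -
  obtain m where p: "p = 2 * m + 1"
    using assms(1) oddE by blast
  show ?thesis
  proof (cases "m = 0")
    case True
    then show ?thesis
      using nu_middle[of 0] assms(2) p by simp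
  next
    case False
    have split:
      "g (theta p (Suc j)) = g (nu p (Suc (Suc j))) + (if j = m - 1 then g (nu p 1) else 0)" for j
      using False assms(2) nu_middle[of m] by (auto simp: theta_def p)
    have "m - 1 < 2 * m"
      using False by simp
    then have "(\<Sum>j<p - 1. g (theta p (Suc j))) =
        (\<Sum>j<2 * m. g (nu p (Suc (Suc j)))) + g (nu p 1)"
      unfolding split sum.distrib by (simp add: p)
    also have "\<dots> = (\<Sum>k<p. g (nu p (Suc k)))"
      by (simp add: p sum.lessThan_Suc_shift add.commute del: sum.lessThan_Suc)
    finally show ?thesis .
  qed
qed

lemma sin_ge_half:
  fixes x :: real
  assumes x: "0 \<le> x" "x \<le> 1"
  shows "x / 2 \<le> sin x"
proof -
  have "\<bar>sin x - x\<bar> \<le> \<bar>x\<bar> ^ 3 / 6"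
    using Maclaurin_sin_bound[of x 3] by (simp add: sin_coeff_def eval_nat_numeral)
  moreover have "x * (x * x) \<le> x * 1"
    using x by (intro mult_left_mono mult_le_one) auto
  then have "x ^ 3 \<le> x"
    by (simp add: power3_eq_cube)
  ultimately show ?thesis
    using x unfolding abs_le_iff by linarith
qed

lemma sin_le_abs_sin:
  assumes "0 \<le> a" "a \<le> \<bar>y\<bar>" "\<bar>y\<bar> \<le> pi / 2"
  shows "sin a \<le> \<bar>sin y\<bar>"
proof -
  have "sin a \<le> sin \<bar>y\<bar>"
    using assms by (intro sin_monotone_2pi_le) auto
  moreover have "sin \<bar>y\<bar> = \<bar>sin y\<bar>"
    using assms sin_ge_zero[of "\<bar>y\<bar>"] by (cases "0 \<le> y") auto
  ultimately show ?thesis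
    by simp
qed

lemma abs_nu_ge:
  assumes "1 \<le> k" "k \<le> p" "2 * k \<noteq> p + 1"
  shows "1 / real p \<le> \<bar>nu p k\<bar>"
proof -
  define y where "y = (2 * real k - 1 - real p) * pi / (2 * real p)"
  have p: "2 \<le> p"
    using assms by linarith
  have abs_y: "\<bar>y\<bar> = \<bar>2 * real k - 1 - real p\<bar> * (pi / (2 * real p))"
    by (simp add: y_def abs_mult)
  have "1 \<le> \<bar>2 * real k - 1 - real p\<bar>" "\<bar>2 * real k - 1 - real p\<bar> \<le> real p"
    using assms by linarith+
  then have y: "pi / (2 * real p) \<le> \<bar>y\<bar>" "\<bar>y\<bar> \<le> pi / 2"
    unfolding abs_y using p mult_right_mono[of _ _ "pi / (2 * real p)"] by force+
  have "pi / (2 * real p) \<le> 1"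
    using p pi_less_4 by (simp add: field_simps)
  then have "pi / (4 * real p) \<le> sin (pi / (2 * real p))"
    using sin_ge_half[of "pi / (2 * real p)"] by simp
  also have "\<dots> \<le> \<bar>sin y\<bar>"
    using y by (intro sin_le_abs_sin) auto
  also have "\<bar>sin y\<bar> = \<bar>nu p k\<bar> / 2"
  proof -
    have "(2 * real k - 1) * pi / (2 * real p) = pi / 2 + y"
      using p by (simp add: y_def field_simps)
    then show ?thesis
      by (simp add: nu_def cos_add)
  qed
  finally show ?thesis
    using p pi_ge_two by (simp add: field_simps)
qed

lemma abs_theta_ge:
  assumes "odd p" "1 \<le> j" "j < p"
  shows "1 / real p \<le> \<bar>theta p j\<bar>"
  using assms by (auto simp: theta_def intro!: abs_nu_ge elim!: oddE)

lemma theta_eq_2cos: "\<exists>t. theta p j = 2 * cos t"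
  by (auto simp: theta_def nu_def)

lemma abs_theta_le: "\<bar>theta p j\<bar> \<le> 2"
  using theta_eq_2cos[of p j] by (auto simp: abs_mult)

lemma abs_cheb_half_theta_le: "\<bar>cheb n (theta p j / 2)\<bar> \<le> 1"
  using theta_eq_2cos[of p j] abs_cheb_cos_le_1 by auto

lemma abs_Rstar_theta_le: "\<bar>Rstar n (theta p j)\<bar> \<le> 4"
proof -
  have "\<bar>rcoef n\<bar> \<le> 1"
    by (simp add: rcoef_def)
  then show ?thesis
    using abs_cheb_half_theta_le[of n p j] unfolding Rstar_def abs_le_iff by linarith
qed

lemma frob_nonneg: "0 \<le> frob A"
  by (simp add: frob_def sum_nonneg)

lemma frob_le_entry_bound:
  assumes "A \<in> carrier_mat n m" "\<And>i j. i < n \<Longrightarrow> j < m \<Longrightarrow> \<bar>A $$ (i, j)\<bar> \<le> b"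
  shows "frob A \<le> sqrt (real (n * m)) * b"
proof (cases "n = 0 \<or> m = 0")
  case True
  then show ?thesis
    using assms(1) by (auto simp: frob_def)
next
  case False
  then have "0 \<le> b"
    using assms(2)[of 0 0] by (auto intro: order_trans[OF abs_ge_zero])
  have "(A $$ (i, j))\<^sup>2 \<le> b\<^sup>2" if "i < n" "j < m" for i j
    using power_mono[OF assms(2)[OF that] abs_ge_zero, of 2] by simp
  moreover have "dim_row A = n" "dim_col A = m"
    using assms(1) by auto
  ultimately have "(\<Sum>i<dim_row A. \<Sum>j<dim_col A. (A $$ (i, j))\<^sup>2) \<le> (\<Sum>i<n. \<Sum>j<m. b\<^sup>2)"
    by (simp only:) (intro sum_mono, simp)
  also have "\<dots> = (sqrt (real (n * m)) * b)\<^sup>2"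
    by (simp add: power_mult_distrib)
  finally show ?thesis
    using \<open>0 \<le> b\<close> unfolding frob_def by (simp add: real_le_lsqrt)
qed

lemma mat_inverse_eqI:
  assumes "A \<in> carrier_mat n n" "B \<in> carrier_mat n n" "A * B = 1\<^sub>m n" "B * A = 1\<^sub>m n"
  shows "Defs.mat_inverse A = B"
  unfolding Defs.mat_inverse_def
proof (rule the_equality)
  fix C
  assume "C \<in> carrier_mat (dim_row A) (dim_row A) \<and>
    A * C = 1\<^sub>m (dim_row A) \<and> C * A = 1\<^sub>m (dim_row A)"
  then have C: "C \<in> carrier_mat n n" "A * C = 1\<^sub>m n"
    using assms(1) by auto
  have "C = (B * A) * C"
    using assms(4) C(1) by simp
  also have "\<dots> = B * (A * C)"
    using assms(2,1) C(1) by (rule assoc_mult_mat)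
  also have "\<dots> = B"
    using assms(2) C(2) by simp
  finally show "C = B" .
qed (use assms in auto)

lemma Cond_le_entry_bounds:
  assumes "A \<in> carrier_mat n n" "B \<in> carrier_mat n n" "B * A = 1\<^sub>m n"
    and "\<And>i j. i < n \<Longrightarrow> j < n \<Longrightarrow> \<bar>A $$ (i, j)\<bar> \<le> a"
    and "\<And>i j. i < n \<Longrightarrow> j < n \<Longrightarrow> \<bar>B $$ (i, j)\<bar> \<le> b"
  shows "Cond A \<le> real n ^ 2 * a * b"
proof -
  have "Defs.mat_inverse A = B"
    using assms(1-3) mat_mult_left_right_inverse[OF assms(2,1,3)] by (intro mat_inverse_eqI) auto
  moreover have "frob A \<le> real n * a" "frob B \<le> real n * b"
    using frob_le_entry_bound[OF assms(1,4)] frob_le_entry_bound[OF assms(2,5)] by simp_all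
  ultimately have "Cond A \<le> (real n * a) * (real n * b)"
    unfolding Cond_def by (intro mult_mono) (auto intro: order_trans[OF frob_nonneg])
  then show ?thesis
    by (simp add: power2_eq_square algebra_simps)
qed

definition U4p_inv :: "nat \<Rightarrow> real mat" where
  "U4p_inv p = mat (p - 1) (p - 1)
     (\<lambda>(i, j). theta p (Suc j) * cheb (Suc i) (theta p (Suc j) / 2) / real p)"

lemma theta_mult_U4p_entry:
  assumes "j < p - 1" "i < p - 1"
  shows "theta p (Suc j) * U4p p rstar_poly $$ (j, i) = Rstar (Suc i) (theta p (Suc j))"
  using assms by (simp add: U4p_def Rstar_Suc_eq_rstar_poly)

lemma N4p_eq_Pdiag_mult_U4p: "N4p p = Pdiag p * U4p p rstar_poly"
proof -
  have "Pdiag p * U4p p rstar_poly =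
      mat (p - 1) (p - 1) (\<lambda>(j, i). theta p (Suc j) * U4p p rstar_poly $$ (j, i))"
    unfolding Pdiag_def by (simp add: mat_diag_mult_left U4p_def)
  also have "\<dots> = N4p p"
    by (rule eq_matI) (auto simp: N4p_def theta_mult_U4p_entry)
  finally show ?thesis ..
qed

lemma sum_cheb_mult_Rstar_theta:
  assumes "odd p" "i < p - 1" "i' < p - 1"
  shows "(\<Sum>j<p - 1. cheb (Suc i) (theta p (Suc j) / 2) * Rstar (Suc i') (theta p (Suc j))) =
    (if i = i' then real p else 0)"
proof -
  let ?c = "\<lambda>m k. cos (real m * node_angle p k)"
  have "(\<Sum>j<p - 1. cheb (Suc i) (theta p (Suc j) / 2) * Rstar (Suc i') (theta p (Suc j))) =
      (\<Sum>k<p. cheb (Suc i) (nu p (Suc k) / 2) * Rstar (Suc i') (nu p (Suc k)))"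
    using assms(1) by (rule sum_theta_eq_sum_nu) (simp add: Rstar_Suc_eq_rstar_poly)
  also have "\<dots> = (\<Sum>k<p. 2 * (?c (Suc i) k * ?c (Suc i') k) + 2 * rcoef (Suc i') * ?c (Suc i) k)"
    by (simp add: nu_Suc Rstar_def cheb_cos algebra_simps)
  also have "\<dots> =
      2 * (\<Sum>k<p. ?c (Suc i) k * ?c (Suc i') k) + 2 * rcoef (Suc i') * (\<Sum>k<p. ?c (Suc i) k)"
    by (simp add: sum.distrib sum_distrib_left)
  also have "\<dots> = (if i = i' then real p else 0)"
  proof -
    have "(\<Sum>k<p. ?c (Suc i) k * ?c (Suc i') k) = (if Suc i = Suc i' then real p / 2 else 0)"
      using assms by (intro sum_cos_node_angle_orthogonal) auto
    moreover have "(\<Sum>k<p. ?c (Suc i) k) = 0"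
      using assms by (intro sum_cos_node_angle) auto
    ultimately show ?thesis
      by (simp only:) simp
  qed
  finally show ?thesis .
qed

lemma U4p_inv_mult_U4p:
  assumes "odd p"
  shows "U4p_inv p * U4p p rstar_poly = 1\<^sub>m (p - 1)"
proof (rule eq_matI)
  fix i i'
  assume "i < dim_row (1\<^sub>m (p - 1) :: real mat)" "i' < dim_col (1\<^sub>m (p - 1) :: real mat)"
  then have ii': "i < p - 1" "i' < p - 1"
    by auto
  have "(U4p_inv p * U4p p rstar_poly) $$ (i, i') =
      (\<Sum>j<p - 1. cheb (Suc i) (theta p (Suc j) / 2) * Rstar (Suc i') (theta p (Suc j))) / real p"
    using ii' by (simp add: U4p_inv_def U4p_def scalar_prod_def sum_divide_distrib atLeast0LessThan
        Rstar_Suc_eq_rstar_poly) (rule sum.cong; simp add: ac_simps)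
  also have "\<dots> = 1\<^sub>m (p - 1) $$ (i, i')"
    using ii' sum_cheb_mult_Rstar_theta[OF assms ii'] by (cases "p = 0") simp_all
  finally show "(U4p_inv p * U4p p rstar_poly) $$ (i, i') = 1\<^sub>m (p - 1) $$ (i, i')" .
qed (auto simp: U4p_inv_def U4p_def)

lemma abs_U4p_entry_le:
  assumes "odd p" "j < p - 1" "i < p - 1"
  shows "\<bar>U4p p rstar_poly $$ (j, i)\<bar> \<le> 4 * real p"
proof -
  let ?u = "\<bar>U4p p rstar_poly $$ (j, i)\<bar>"
  have "1 \<le> real p * \<bar>theta p (Suc j)\<bar>"
    using assms abs_theta_ge[of p "Suc j"] by (simp add: field_simps)
  then have "?u \<le> real p * (\<bar>theta p (Suc j)\<bar> * ?u)"
    using mult_right_mono[of 1 "real p * \<bar>theta p (Suc j)\<bar>" ?u] by simp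
  moreover have "\<bar>theta p (Suc j)\<bar> * ?u \<le> 4"
    using abs_Rstar_theta_le theta_mult_U4p_entry[OF assms(2,3)] by (metis abs_mult)
  then have "real p * (\<bar>theta p (Suc j)\<bar> * ?u) \<le> real p * 4"
    by (intro mult_left_mono) auto
  ultimately show ?thesis
    by (simp add: mult.commute)
qed

lemma abs_U4p_inv_entry_le:
  assumes "i < p - 1" "j < p - 1"
  shows "\<bar>U4p_inv p $$ (i, j)\<bar> \<le> 2 / real p"
proof -
  have "\<bar>theta p (Suc j) * cheb (Suc i) (theta p (Suc j) / 2)\<bar> \<le> 2 * 1"
    unfolding abs_mult using abs_theta_le abs_cheb_half_theta_le by (rule mult_mono) auto
  then show ?thesis
    using assms by (simp add: U4p_inv_def abs_divide divide_right_mono)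
qed

lemma eight_mult_pred_square_le:
  fixes x :: real
  assumes "2 \<le> x"
  shows "8 * (x - 1)\<^sup>2 \<le> x ^ 3 * (x + 1) * (2 * x - 1)\<^sup>2"
proof -
  have "2 * 3 \<le> x * (x + 1)"
    using assms by (intro mult_mono) auto
  moreover have "3\<^sup>2 \<le> (2 * x - 1)\<^sup>2"
    using assms by (intro power_mono) auto
  ultimately have "6 * 9 \<le> x * (x + 1) * (2 * x - 1)\<^sup>2"
    by (intro mult_mono) auto
  then have "x\<^sup>2 * 8 \<le> x\<^sup>2 * (x * (x + 1) * (2 * x - 1)\<^sup>2)"
    by (intro mult_left_mono) auto
  moreover have "(x - 1)\<^sup>2 \<le> x\<^sup>2"
    using assms by (intro power_mono) auto
  ultimately show ?thesis
    by (simp add: power2_eq_square power3_eq_cube algebra_simps)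
qed

theorem mainTheorem7:
  fixes p :: nat
  assumes "prime p" and "odd p"
  shows "\<exists>r :: nat \<Rightarrow> int poly.
           (\<forall>i \<le> p - 2. lead_coeff (r i) = 1 \<and> degree (r i) = i) \<and>
           N4p p = Pdiag p * U4p p r \<and>
           invertible_mat (U4p p r) \<and>
           Cond (U4p p r) \<le> real p ^ 3 * (real p + 1) * (2 * real p - 1) ^ 2"
proof -
  have p: "3 \<le> p"
    using assms prime_ge_2_nat[of p] by (cases "p = 2") auto
  define U where "U = U4p p rstar_poly"
  have U: "U \<in> carrier_mat (p - 1) (p - 1)" and W: "U4p_inv p \<in> carrier_mat (p - 1) (p - 1)"
    by (simp_all add: U_def U4p_def U4p_inv_def)
  have WU: "U4p_inv p * U = 1\<^sub>m (p - 1)"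
    unfolding U_def using assms(2) by (rule U4p_inv_mult_U4p)
  then have "invertible_mat U"
    using U W mat_mult_left_right_inverse[OF W U WU]
    unfolding invertible_mat_def inverts_mat_def by auto
  have "Cond U \<le> real (p - 1) ^ 2 * (4 * real p) * (2 / real p)"
    using U W WU abs_U4p_entry_le[OF assms(2)] abs_U4p_inv_entry_le
    unfolding U_def by (rule Cond_le_entry_bounds)
  also have "\<dots> = 8 * (real p - 1)\<^sup>2"
    using p by (simp add: of_nat_diff)
  also have "\<dots> \<le> real p ^ 3 * (real p + 1) * (2 * real p - 1) ^ 2"
    using p by (intro eight_mult_pred_square_le) simp
  finally show ?thesis
    using \<open>invertible_mat U\<close> rstar_poly_monic N4p_eq_Pdiag_mult_U4p
    unfolding U_def by blast
qed

end
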